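(* Let $T=(V,E)$ be an $X$-tree. Then $\mathrm{rk}^T(\mathcal{L})\le|E|-1$ for every bipartite $\mathcal{L}\subseteq\binom{X}{2}$. Moreover, for every bipartite $\mathcal{L}\subseteq\binom{X}{2}$ the following are equivalent: (i) $\mathrm{rk}^T(\mathcal{L})=|E|-1$; (ii) there is a cord $xy\in\binom{X}{2}$ such that $\mathcal{L}\cup\{xy\}$ is an edge-weight lasso for $T$; (iii) $\mathcal{L}$ is connected, and for every cord $xy$, $\mathcal{L}\cup\{xy\}$ is an edge-weight lasso for $T$ if and only if $\mathcal{L}\cup\{xy\}$ is not bipartite; (iv) $\mathcal{L}$ is connected, the closure $[\mathcal{L}]^T$ equals $A\vee B$ where $\{A,B\}$ is the (unique) bipartition of $X$ with $\mathcal{L}\subseteq A\vee B$, and $A\vee B$ is a hyperplane of $\mathbb{M}(T)$.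
   Context: Let $X$ be a finite set with $|X|=n\ge 3$. An $X$-tree is a finite tree $T=(V,E)$ whose set of degree-1 vertices is exactly $X$ and which has no vertices of degree $2$. A cord is a $2$-subset $xy$ of $X$. For each cord $xy$, $\lambda^T_{xy}:\mathbb{R}^E\to\mathbb{R}$, $\omega\mapsto\sum_{e\in E(x|y)}\omega(e)$, where $E(x|y)$ is the edge set of the path from $x$ to $y$. For $\mathcal{L}\subseteq\binom{X}{2}$, $\mathrm{rk}^T(\mathcal{L})$ is the dimension of the span of $\{\lambda^T_{xy}:xy\in\mathcal{L}\}$; $\mathbb{M}(T)$ is the matroid on $\binom{X}{2}$ with rank function $\mathrm{rk}^T$ (its rank is $|E|$). The closure of $\mathcal{L}$ is $[\mathcal{L}]^T=\{xy\in\binom{X}{2}:\mathrm{rk}^T(\mathcal{L}\cup\{xy\})=\mathrm{rk}^T(\mathcal{L})\}$; a hyperplane is a maximal subset of $\binom{X}{2}$ of rank less than $|E|$. An edge-weight lasso for $T$ is a set $\mathcal{L}$ with $\mathrm{rk}^T(\mathcal{L})=|E|$. $\mathcal{L}$ is called connected (resp. bipartite) if the graph $\Gamma(\mathcal{L})=(X,\mathcal{L})$ with vertex set $X$ and edge set $\mathcal{L}$ is connected (resp. bipartite). For disjoint $A,B\subseteq X$, $A\vee B:=\{ab:a\in A,b\in B\}$. *)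

theory Defs
  imports "HOL-Analysis.Analysis" "HOL-Library.Function_Algebras"
begin

definition adj_rel :: "'a set set \<Rightarrow> ('a \<times> 'a) set" where
  "adj_rel E = {(u, v). {u, v} \<in> E \<and> u \<noteq> v}"

definition graph_connected :: "'a set \<Rightarrow> 'a set set \<Rightarrow> bool" where
  "graph_connected V E \<longleftrightarrow> (\<forall>u\<in>V. \<forall>v\<in>V. (u, v) \<in> (adj_rel E)\<^sup>*)"

definition simple_graph :: "'a set \<Rightarrow> 'a set set \<Rightarrow> bool" where
  "simple_graph V E \<longleftrightarrow> finite V \<and> (\<forall>e\<in>E. \<exists>u v. e = {u, v} \<and> u \<noteq> v \<and> u \<in> V \<and> v \<in> V)"

definition is_tree :: "'a set \<Rightarrow> 'a set set \<Rightarrow> bool" where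
  "is_tree V E \<longleftrightarrow> simple_graph V E \<and> graph_connected V E
      \<and> (\<forall>e\<in>E. \<not> graph_connected V (E - {e}))"

definition degree :: "'a set set \<Rightarrow> 'a \<Rightarrow> nat" where
  "degree E v = card {e\<in>E. v \<in> e}"

definition X_tree :: "'a set \<Rightarrow> 'a set set \<Rightarrow> 'a set \<Rightarrow> bool" where
  "X_tree V E X \<longleftrightarrow> is_tree V E \<and> {v\<in>V. degree E v = 1} = X
      \<and> (\<forall>v\<in>V. degree E v \<noteq> 2)"

definition is_path :: "'a set set \<Rightarrow> 'a list \<Rightarrow> 'a \<Rightarrow> 'a \<Rightarrow> bool" where
  "is_path E ps x y \<longleftrightarrow> ps \<noteq> [] \<and> distinct ps \<and> hd ps = x \<and> last ps = y
      \<and> (\<forall>i. Suc i < length ps \<longrightarrow> {ps ! i, ps ! Suc i} \<in> E)"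

definition path_edge_set :: "'a list \<Rightarrow> 'a set set" where
  "path_edge_set ps = {{ps ! i, ps ! Suc i} | i. Suc i < length ps}"

definition path_edges :: "'a set set \<Rightarrow> 'a \<Rightarrow> 'a \<Rightarrow> 'a set set" where
  "path_edges E x y = (THE P. \<exists>ps. is_path E ps x y \<and> P = path_edge_set ps)"

text \<open>Edge weightings omega are functions from edges to reals (only values on E matter);
  lambda_xy maps omega to the sum of weights along the path from x to y.\<close>
definition lam :: "'a set set \<Rightarrow> 'a \<Rightarrow> 'a \<Rightarrow> ('a set \<Rightarrow> real) \<Rightarrow> real" where
  "lam E x y = (\<lambda>\<omega>. \<Sum>e\<in>path_edges E x y. \<omega> e)"

definition fscale :: "real \<Rightarrow> (('a set \<Rightarrow> real) \<Rightarrow> real) \<Rightarrow> (('a set \<Rightarrow> real) \<Rightarrow> real)" where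
  "fscale r f = (\<lambda>\<omega>. r * f \<omega>)"

definition cords :: "'a set \<Rightarrow> 'a set set" where
  "cords X = {c. c \<subseteq> X \<and> card c = 2}"

definition rk :: "'a set set \<Rightarrow> 'a set set \<Rightarrow> nat" where
  "rk E L = vector_space.dim fscale {lam E x y | x y. {x, y} \<in> L \<and> x \<noteq> y}"

definition closure_T :: "'a set set \<Rightarrow> 'a set \<Rightarrow> 'a set set \<Rightarrow> 'a set set" where
  "closure_T E X L = {c \<in> cords X. rk E (L \<union> {c}) = rk E L}"

definition hyperplane :: "'a set set \<Rightarrow> 'a set \<Rightarrow> 'a set set \<Rightarrow> bool" where
  "hyperplane E X H \<longleftrightarrow> H \<subseteq> cords X \<and> rk E H < card E
      \<and> (\<forall>H'. H \<subset> H' \<and> H' \<subseteq> cords X \<longrightarrow> \<not> rk E H' < card E)"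

definition edge_weight_lasso :: "'a set set \<Rightarrow> 'a set \<Rightarrow> 'a set set \<Rightarrow> bool" where
  "edge_weight_lasso E X L \<longleftrightarrow> L \<subseteq> cords X \<and> rk E L = card E"

definition join :: "'a set \<Rightarrow> 'a set \<Rightarrow> 'a set set" where
  "join A B = {{a, b} | a b. a \<in> A \<and> b \<in> B}"

definition cords_connected :: "'a set \<Rightarrow> 'a set set \<Rightarrow> bool" where
  "cords_connected X L \<longleftrightarrow> graph_connected X L"

definition cords_bipartite :: "'a set \<Rightarrow> 'a set set \<Rightarrow> bool" where
  "cords_bipartite X L \<longleftrightarrow> (\<exists>A B. A \<inter> B = {} \<and> A \<union> B = X \<and> L \<subseteq> join A B)"

end

theory Submission
  imports Defs
begin

text \<open>Every form lambda_xy is a sum of coordinate functionals omega \<mapsto> omega e with e \<in> E,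
  so ranks are at most |E|. For s : X \<rightarrow> \<real> let omega_s give each edge the sum of s over the
  leaves it contains; since |X| \<ge> 3, the pendant edge of a leaf contains no other leaf, hence
  lambda_xy omega_s = s x + s y. If L \<subseteq> A \<or> B, the sign function of the two sides makes omega_s
  a common zero of all lambda_xy with xy \<in> L, while the coordinate of a pendant edge does not
  vanish there: so rk L \<le> |E| - 1, and a cord within one side raises the rank by one. If L is
  disconnected, signing one component and its complement separately gives two independent
  such witnesses, and rk L \<le> |E| - 2. The equivalences then follow from these rank
  computations, together with the fact that a cord within one side destroys the bipartiteness
  of a connected L.\<close>

context vector_space
begin

lemma dim_insert_if_finite:
  assumes "finite S"
  shows "dim (insert x S) = (if x \<in> span S then dim S else Suc (dim S))"
proof (cases "x \<in> span S")
  case True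
  then show ?thesis using span_redundant span_eq_dim by metis
next
  case False
  obtain B where B: "B \<subseteq> S" "independent B" "S \<subseteq> span B"
    using maximal_independent_subset[of S] by blast
  have "finite B" using B(1) assms finite_subset by blast
  have "span S = span B"
    using span_mono[OF B(1)] span_mono[OF B(3)] span_span by (simp add: subset_antisym)
  then have "x \<notin> span B" "x \<notin> B" using False span_base by blast+
  have "card (insert x B) = dim (insert x S)"
  proof (rule basis_card_eq_dim)
    show "insert x B \<subseteq> insert x S" using B(1) by blast
    show "insert x S \<subseteq> span (insert x B)"
      using B(3) span_mono[of B "insert x B"] span_base[of x "insert x B"] by blast
    show "independent (insert x B)" using independent_insertI \<open>x \<notin> span B\<close> B(2) by blast
  qed
  moreover have "card B = dim S" using basis_card_eq_dim[OF B(1,3,2)] .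
  ultimately show ?thesis using False \<open>finite B\<close> \<open>x \<notin> B\<close> by simp
qed

lemma dim_mono_if_finite:
  assumes "finite W" "V \<subseteq> span W"
  shows "dim V \<le> dim W"
proof -
  obtain B where B: "B \<subseteq> W" "independent B" "W \<subseteq> span B"
    using maximal_independent_subset[of W] by blast
  have "V \<subseteq> span B" using assms(2) span_mono[OF B(3)] span_span by simp
  then have "dim V \<le> card B" using dim_le_card B(1) assms(1) finite_subset by blast
  also have "card B = dim W" using basis_card_eq_dim[OF B(1,3,2)] .
  finally show ?thesis .
qed

end

interpretation VS: vector_space "fscale :: real \<Rightarrow> (('a set \<Rightarrow> real) \<Rightarrow> real) \<Rightarrow> _"
  by unfold_locales (auto simp: fscale_def fun_eq_iff algebra_simps)

lemma span_vanishing_at: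
  assumes "\<And>f. f \<in> S \<Longrightarrow> f \<omega> = 0" and "g \<in> VS.span S"
  shows "g \<omega> = 0"
  using assms(2) by (induction rule: VS.span_induct_alt) (auto simp: fscale_def assms(1))

lemma dim_insert_nonvanishing:
  assumes "finite S" "\<And>f. f \<in> S \<Longrightarrow> f \<omega> = 0" and "g \<omega> \<noteq> 0"
  shows "VS.dim (insert g S) = Suc (VS.dim S)"
proof -
  have "g \<notin> VS.span S" using span_vanishing_at[of S \<omega> g] assms(2,3) by blast
  then show ?thesis using VS.dim_insert_if_finite[OF assms(1)] by simp
qed

lemma sum_apply: "(\<Sum>e\<in>A. f e) \<omega> = (\<Sum>e\<in>A. f e \<omega>)"
  by (induction A rule: infinite_finite_induct) (simp_all add: plus_fun_def zero_fun_def)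

section \<open>Paths in trees\<close>

lemma sym_adj_rel: "sym (adj_rel F)"
  by (auto simp: sym_def adj_rel_def insert_commute)

lemma adj_rel_rtrancl_sym: "(u, v) \<in> (adj_rel F)\<^sup>* \<Longrightarrow> (v, u) \<in> (adj_rel F)\<^sup>*"
  using sym_rtrancl[OF sym_adj_rel] by (rule symD)

lemma rtrancl_nth_chain:
  "(\<And>j. i \<le> j \<Longrightarrow> j < k \<Longrightarrow> (xs ! j, xs ! Suc j) \<in> R) \<Longrightarrow> i \<le> k \<Longrightarrow> (xs ! i, xs ! k) \<in> R\<^sup>*"
proof (induction k)
  case (Suc k)
  show ?case
  proof (cases "i = Suc k")
    case False
    then have "(xs ! i, xs ! k) \<in> R\<^sup>*" using Suc by simp
    with Suc.prems(1)[of k] False Suc.prems(2) show ?thesis by (auto intro: rtrancl_into_rtrancl)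
  qed simp
qed simp

lemma is_path_ends: "is_path E ps x y \<Longrightarrow> ps ! 0 = x \<and> ps ! (length ps - 1) = y"
  by (auto simp: is_path_def hd_conv_nth last_conv_nth)

lemma is_path_step_adj_rel:
  assumes "is_path E ps x y" "Suc j < length ps" "{ps ! j, ps ! Suc j} \<noteq> e"
  shows "(ps ! j, ps ! Suc j) \<in> adj_rel (E - {e})"
  using assms by (auto simp: is_path_def adj_rel_def nth_eq_iff_index_eq)

lemma path_edge_set_subset: "is_path E ps x y \<Longrightarrow> path_edge_set ps \<subseteq> E"
  by (auto simp: is_path_def path_edge_set_def)

lemma path_edge_set_nth_inj:
  assumes "distinct ps" "Suc i < length ps" "Suc j < length ps"
    and "{ps ! i, ps ! Suc i} = {ps ! j, ps ! Suc j}"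
  shows "i = j"
  using assms by (auto simp: doubleton_eq_iff nth_eq_iff_index_eq)

lemma is_path_connects_avoiding:
  assumes "is_path E ps x y" "e \<notin> path_edge_set ps"
  shows "(x, y) \<in> (adj_rel (E - {e}))\<^sup>*"
proof -
  have "(ps ! 0, ps ! (length ps - 1)) \<in> (adj_rel (E - {e}))\<^sup>*"
    using assms by (intro rtrancl_nth_chain is_path_step_adj_rel) (auto simp: path_edge_set_def)
  then show ?thesis using is_path_ends[OF assms(1)] by simp
qed

lemma tree_edge_is_bridge:
  assumes tree: "is_tree V E" and e: "{u, v} \<in> E"
  shows "(u, v) \<notin> (adj_rel (E - {{u, v}}))\<^sup>*"
proof
  let ?R = "adj_rel (E - {{u, v}})"
  assume uv: "(u, v) \<in> ?R\<^sup>*"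
  have "adj_rel E \<subseteq> ?R\<^sup>*"
  proof
    fix p assume "p \<in> adj_rel E"
    then obtain a b where p: "p = (a, b)" "{a, b} \<in> E" "a \<noteq> b" by (auto simp: adj_rel_def)
    show "p \<in> ?R\<^sup>*"
    proof (cases "{a, b} = {u, v}")
      case True
      then show ?thesis using uv adj_rel_rtrancl_sym[OF uv] p(1) by (auto simp: doubleton_eq_iff)
    qed (use p in \<open>auto simp: adj_rel_def\<close>)
  qed
  then have "(adj_rel E)\<^sup>* \<subseteq> ?R\<^sup>*" by (rule rtrancl_subset_rtrancl)
  then have "graph_connected V (E - {{u, v}})"
    using tree by (auto simp: is_tree_def graph_connected_def)
  then show False using tree e by (auto simp: is_tree_def)
qed

lemma path_edge_set_eq_bridges:
  assumes tree: "is_tree V E" and p: "is_path E ps x y"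
  shows "path_edge_set ps = {e \<in> E. (x, y) \<notin> (adj_rel (E - {e}))\<^sup>*}"
proof (intro equalityI subsetI CollectI conjI)
  fix e assume "e \<in> path_edge_set ps"
  then obtain i where i: "Suc i < length ps" "e = {ps ! i, ps ! Suc i}"
    by (auto simp: path_edge_set_def)
  then show "e \<in> E" using p by (auto simp: is_path_def)
  let ?R = "adj_rel (E - {e})"
  have off_e: "(ps ! j, ps ! Suc j) \<in> ?R" if "Suc j < length ps" "j \<noteq> i" for j
  proof -
    have "{ps ! j, ps ! Suc j} \<noteq> e"
      using path_edge_set_nth_inj[of ps j i] i that p by (auto simp: is_path_def)
    then show ?thesis by (rule is_path_step_adj_rel[OF p that(1)])
  qed
  have "(x, ps ! i) \<in> ?R\<^sup>*"
    using rtrancl_nth_chain[of 0 i ps ?R] i(1) off_e is_path_ends[OF p] by simp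
  moreover have "(ps ! Suc i, y) \<in> ?R\<^sup>*"
    using rtrancl_nth_chain[of "Suc i" "length ps - 1" ps ?R] i(1) off_e is_path_ends[OF p] by simp
  moreover have "(ps ! i, ps ! Suc i) \<notin> ?R\<^sup>*"
    using tree_edge_is_bridge[OF tree] \<open>e \<in> E\<close> i(2) by blast
  ultimately show "(x, y) \<notin> ?R\<^sup>*"
    by (meson adj_rel_rtrancl_sym rtrancl_trans)
next
  fix e assume "e \<in> {e \<in> E. (x, y) \<notin> (adj_rel (E - {e}))\<^sup>*}"
  then show "e \<in> path_edge_set ps" using is_path_connects_avoiding[OF p] by blast
qed

lemma is_path_exists:
  assumes "(x, y) \<in> (adj_rel E)\<^sup>*"
  shows "\<exists>ps. is_path E ps x y"
  using assms
proof (induction rule: rtrancl_induct)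
  case base
  have "is_path E [x] x x" by (simp add: is_path_def)
  then show ?case ..
next
  case (step z w)
  then obtain ps where p: "is_path E ps x z" by blast
  have zw: "{z, w} \<in> E" using step(2) by (auto simp: adj_rel_def)
  show ?case
  proof (cases "w \<in> set ps")
    case True
    then obtain k where k: "k < length ps" "ps ! k = w" by (auto simp: in_set_conv_nth)
    have "is_path E (take (Suc k) ps) x w"
      using p k unfolding is_path_def by (auto simp: hd_conv_nth last_conv_nth)
    then show ?thesis ..
  next
    case False
    have "{(ps @ [w]) ! i, (ps @ [w]) ! Suc i} \<in> E" if "Suc i < Suc (length ps)" for i
    proof (cases "Suc i < length ps")
      case True
      then show ?thesis using p by (auto simp: is_path_def nth_append)
    next
      case False
      then have "i = length ps - 1" "ps \<noteq> []" using that p by (auto simp: is_path_def)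
      then show ?thesis using zw is_path_ends[OF p] by (auto simp: nth_append)
    qed
    then have "is_path E (ps @ [w]) x w"
      using p False unfolding is_path_def by auto
    then show ?thesis ..
  qed
qed

lemma path_edges_eq_path_edge_set:
  assumes tree: "is_tree V E" and p: "is_path E ps x y"
  shows "path_edges E x y = path_edge_set ps"
  unfolding path_edges_def
proof (rule the_equality)
  fix P assume "\<exists>ps'. is_path E ps' x y \<and> P = path_edge_set ps'"
  then show "P = path_edge_set ps"
    using path_edge_set_eq_bridges[OF tree] p by blast
qed (use p in blast)

lemma path_edges_eq_bridges:
  assumes tree: "is_tree V E" and "x \<in> V" "y \<in> V"
  shows "path_edges E x y = {e \<in> E. (x, y) \<notin> (adj_rel (E - {e}))\<^sup>*}"
proof -
  have "(x, y) \<in> (adj_rel E)\<^sup>*"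
    using tree assms(2,3) unfolding is_tree_def graph_connected_def by blast
  from is_path_exists[OF this] obtain ps where "is_path E ps x y" ..
  then show ?thesis
    using path_edges_eq_path_edge_set[OF tree] path_edge_set_eq_bridges[OF tree] by simp
qed

lemma path_edges_commute:
  assumes "is_tree V E" "x \<in> V" "y \<in> V"
  shows "path_edges E x y = path_edges E y x"
  unfolding path_edges_eq_bridges[OF assms] path_edges_eq_bridges[OF assms(1,3,2)]
  using adj_rel_rtrancl_sym by metis

lemma is_path_ends_in_path_edges:
  assumes "is_path E ps x y" "x \<noteq> y"
  shows "x \<in> \<Union>(path_edge_set ps)" "y \<in> \<Union>(path_edge_set ps)"
proof -
  have "length ps \<noteq> 0" "length ps \<noteq> 1"
    using assms is_path_ends[OF assms(1)] by (auto simp: is_path_def)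
  then have len: "2 \<le> length ps" by linarith
  then have "Suc 0 < length ps" "Suc (length ps - 2) < length ps"
      "ps ! Suc (length ps - 2) = ps ! (length ps - 1)"
    by (auto simp: Suc_diff_Suc numeral_2_eq_2)
  then have "{ps ! 0, ps ! Suc 0} \<in> path_edge_set ps"
      "{ps ! (length ps - 2), ps ! (length ps - 1)} \<in> path_edge_set ps"
    unfolding path_edge_set_def by (blast, metis (mono_tags, lifting) mem_Collect_eq)
  then show "x \<in> \<Union>(path_edge_set ps)" "y \<in> \<Union>(path_edge_set ps)"
    using is_path_ends[OF assms(1)] by blast+
qed

lemma is_path_inner_vertex:
  assumes p: "is_path E ps x y" and z: "z \<in> \<Union>(path_edge_set ps)" "z \<noteq> x" "z \<noteq> y"
  obtains e e' where "e \<in> path_edge_set ps" "e' \<in> path_edge_set ps" "e \<noteq> e'" "z \<in> e" "z \<in> e'"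
proof -
  obtain i where "Suc i < length ps" "z = ps ! i \<or> z = ps ! Suc i"
    using z(1) by (auto simp: path_edge_set_def)
  then have "\<exists>j<length ps. ps ! j = z" using Suc_lessD by blast
  then obtain j where j: "j < length ps" "ps ! j = z" by blast
  then have "0 < j" "j \<noteq> length ps - 1"
    using z(2,3) is_path_ends[OF p] by (auto intro: gr0I)
  then have "0 < j" "Suc j < length ps" using j(1) by linarith+
  moreover have "ps ! (j - 1) \<noteq> ps ! Suc j"
    using p \<open>Suc j < length ps\<close> by (auto simp: is_path_def nth_eq_iff_index_eq)
  ultimately show thesis
    using j that[of "{ps ! (j - 1), ps ! Suc (j - 1)}" "{ps ! j, ps ! Suc j}"]
    by (force simp: path_edge_set_def doubleton_eq_iff)
qed

lemma cordsE:
  assumes "c \<in> cords X"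
  obtains x y where "c = {x, y}" "x \<noteq> y" "x \<in> X" "y \<in> X"
  using assms by (auto simp: cords_def card_2_iff)

lemma doubleton_in_cords: "x \<in> X \<Longrightarrow> y \<in> X \<Longrightarrow> x \<noteq> y \<Longrightarrow> {x, y} \<in> cords X"
  by (simp add: cords_def)

lemma doubleton_in_join_iff:
  assumes "A \<inter> B = {}"
  shows "{x, y} \<in> join A B \<longleftrightarrow> (x \<in> A \<and> y \<in> B) \<or> (x \<in> B \<and> y \<in> A)"
  using assms by (auto simp: join_def doubleton_eq_iff)

lemma join_subset_cords: "A \<inter> B = {} \<Longrightarrow> join A B \<subseteq> cords (A \<union> B)"
  by (auto simp: join_def intro!: doubleton_in_cords)

lemma exists_pair_same_side:
  assumes "finite X" "3 \<le> card X"
  shows "\<exists>a\<in>X. \<exists>a'\<in>X. a \<noteq> a' \<and> (a \<in> A \<longleftrightarrow> a' \<in> A)"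
proof -
  have "X = (X \<inter> A) \<union> (X - A)" by blast
  then have "card X \<le> card (X \<inter> A) + card (X - A)" by (metis card_Un_le)
  then have "2 \<le> card (X \<inter> A) \<or> 2 \<le> card (X - A)" using assms(2) by linarith
  then obtain S where "S \<subseteq> X \<inter> A \<or> S \<subseteq> X - A" "card S = 2"
    by (metis obtain_subset_with_card_n)
  then show ?thesis by (auto simp: card_2_iff)
qed

lemma connected_bipartite_insert_same_side:
  assumes conn: "graph_connected X L" and L: "L \<subseteq> join A B" "A \<inter> B = {}"
    and a: "a \<in> X" "a' \<in> X" "a \<in> A \<longleftrightarrow> a' \<in> A"
  shows "\<not> cords_bipartite X (L \<union> {{a, a'}})"
proof
  assume "cords_bipartite X (L \<union> {{a, a'}})"
  then obtain A' B' where AB': "A' \<inter> B' = {}" "L \<union> {{a, a'}} \<subseteq> join A' B'"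
    unfolding cords_bipartite_def by blast
  have "(a, a') \<in> (adj_rel L)\<^sup>*" using conn a unfolding graph_connected_def by blast
  then have "(a' \<in> A \<longleftrightarrow> a' \<in> A') \<longleftrightarrow> (a \<in> A \<longleftrightarrow> a \<in> A')"
  proof (induction rule: rtrancl_induct)
    case (step z w)
    then have "{z, w} \<in> join A B" "{z, w} \<in> join A' B'"
      using L(1) AB'(2) by (auto simp: adj_rel_def)
    then show ?case using step.IH L(2) AB'(1) by (auto simp: doubleton_in_join_iff)
  qed simp
  moreover have "{a, a'} \<in> join A' B'" using AB'(2) by blast
  ultimately show False using a(3) AB'(1) by (auto simp: doubleton_in_join_iff)
qed

section \<open>Leaf weightings on an X-tree\<close>

definition pendant_edge :: "'a set set \<Rightarrow> 'a \<Rightarrow> 'a set" where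
  "pendant_edge E x = (THE e. e \<in> E \<and> x \<in> e)"

definition induced_weighting :: "'a set \<Rightarrow> ('a \<Rightarrow> real) \<Rightarrow> 'a set \<Rightarrow> real" where
  "induced_weighting X s e = (\<Sum>z \<in> X \<inter> e. s z)"

definition edge_eval :: "'a set \<Rightarrow> ('a set \<Rightarrow> real) \<Rightarrow> real" where
  "edge_eval e = (\<lambda>\<omega>. \<omega> e)"

definition cord_forms :: "'a set set \<Rightarrow> 'a set set \<Rightarrow> (('a set \<Rightarrow> real) \<Rightarrow> real) set" where
  "cord_forms E L = {lam E x y | x y. {x, y} \<in> L \<and> x \<noteq> y}"

definition signed_indicator :: "'a set \<Rightarrow> 'a set \<Rightarrow> 'a \<Rightarrow> real" where
  "signed_indicator A C z = (if z \<in> C then if z \<in> A then 1 else -1 else 0)"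

lemma rk_eq_dim_cord_forms: "rk E L = VS.dim (cord_forms E L)"
  by (simp add: rk_def cord_forms_def)

locale X_tree_3_leaves =
  fixes V :: "'a set" and E :: "'a set set" and X :: "'a set"
  assumes X_tree: "X_tree V E X" and three_le_card_X: "3 \<le> card X"
begin

lemma tree: "is_tree V E"
  using X_tree by (simp add: X_tree_def)

lemma X_subset_V: "X \<subseteq> V"
  using X_tree by (auto simp: X_tree_def)

lemma finite_X: "finite X"
  using X_subset_V X_tree finite_subset by (auto simp: X_tree_def is_tree_def simple_graph_def)

lemma edge_doubleton: "e \<in> E \<Longrightarrow> \<exists>u v. e = {u, v} \<and> u \<noteq> v \<and> u \<in> V \<and> v \<in> V"
  using tree by (simp add: is_tree_def simple_graph_def)

lemma finite_E: "finite E"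
proof -
  have "E \<subseteq> Pow V" using edge_doubleton by blast
  moreover have "finite V" using tree by (simp add: is_tree_def simple_graph_def)
  ultimately show ?thesis by (rule finite_subset[OF _ finite_Pow_iff[THEN iffD2]])
qed

lemma connected: "u \<in> V \<Longrightarrow> v \<in> V \<Longrightarrow> (u, v) \<in> (adj_rel E)\<^sup>*"
  using tree by (simp add: is_tree_def graph_connected_def)

lemma edges_at_leaf:
  assumes "x \<in> X"
  shows "{e \<in> E. x \<in> e} = {pendant_edge E x}"
proof -
  have "card {e \<in> E. x \<in> e} = 1"
    using X_tree assms by (auto simp: X_tree_def degree_def)
  then obtain e where e: "{e' \<in> E. x \<in> e'} = {e}" by (auto simp: card_1_singleton_iff)
  then have "pendant_edge E x = e" unfolding pendant_edge_def by (intro the_equality) auto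
  then show ?thesis using e by simp
qed

lemma edge_at_leaf_eq_pendant_edge:
  assumes "x \<in> X" "e \<in> E" "x \<in> e"
  shows "e = pendant_edge E x"
proof -
  have "e \<in> {e \<in> E. x \<in> e}" using assms(2,3) by simp
  then show ?thesis by (simp add: edges_at_leaf[OF assms(1)])
qed

lemma pendant_edge_leaves:
  assumes x: "x \<in> X"
  shows "X \<inter> pendant_edge E x = {x}"
proof -
  let ?e = "pendant_edge E x"
  have e: "?e \<in> E" "x \<in> ?e" using edges_at_leaf[OF x] by auto
  then obtain w where w: "?e = {x, w}" "w \<noteq> x"
    using edge_doubleton by (metis doubleton_eq_iff insertE singletonD)
  have "w \<notin> X"
  proof
    assume wX: "w \<in> X"
    have "adj_rel E `` {x, w} \<subseteq> {x, w}"
    proof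
      fix b assume "b \<in> adj_rel E `` {x, w}"
      then obtain a where a: "a \<in> {x, w}" "{a, b} \<in> E" by (auto simp: adj_rel_def)
      have "{a, b} = ?e"
      proof (cases "a = x")
        case False
        then have "a = w" using a(1) by simp
        have "{a, b} = pendant_edge E w"
          by (rule edge_at_leaf_eq_pendant_edge[OF wX a(2)]) (simp add: \<open>a = w\<close>)
        moreover have "?e = pendant_edge E w"
          by (rule edge_at_leaf_eq_pendant_edge[OF wX e(1)]) (simp add: w(1))
        ultimately show ?thesis by simp
      qed (use edge_at_leaf_eq_pendant_edge[OF x] a(2) in auto)
      then show "b \<in> {x, w}" using w by auto
    qed
    then have "(adj_rel E)\<^sup>* `` {x, w} = {x, w}" by (rule Image_closed_trancl)
    moreover have "X \<subseteq> (adj_rel E)\<^sup>* `` {x, w}"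
      using connected X_subset_V x by blast
    ultimately have "card X \<le> card {x, w}" by (simp add: card_mono)
    also have "\<dots> \<le> 2" by (auto simp: card_insert_if)
    finally show False using three_le_card_X by simp
  qed
  then show ?thesis using w x by auto
qed

lemma pendant_edge_weight: "x \<in> X \<Longrightarrow> induced_weighting X s (pendant_edge E x) = s x"
  by (simp add: induced_weighting_def pendant_edge_leaves)

lemma path_edges_at_leaf:
  assumes x: "x \<in> X" and y: "y \<in> X" and xy: "x \<noteq> y" and z: "z \<in> X"
  shows "{e \<in> path_edges E x y. z \<in> e} = (if z = x \<or> z = y then {pendant_edge E z} else {})"
proof -
  have "(x, y) \<in> (adj_rel E)\<^sup>*" using connected X_subset_V x y by blast
  from is_path_exists[OF this] obtain ps where p: "is_path E ps x y" ..
  have P: "path_edges E x y = path_edge_set ps"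
    by (rule path_edges_eq_path_edge_set[OF tree p])
  have sub: "{e \<in> path_edges E x y. z \<in> e} \<subseteq> {pendant_edge E z}"
    using edges_at_leaf[OF z] path_edge_set_subset[OF p] P by blast
  show ?thesis
  proof (cases "z = x \<or> z = y")
    case True
    then show ?thesis using sub is_path_ends_in_path_edges[OF p xy] P by auto
  next
    case False
    have "z \<notin> \<Union>(path_edge_set ps)"
    proof
      assume "z \<in> \<Union>(path_edge_set ps)"
      with p False obtain e e' where "e \<in> path_edge_set ps" "e' \<in> path_edge_set ps" "e \<noteq> e'"
        "z \<in> e" "z \<in> e'" by (elim is_path_inner_vertex) auto
      then show False using sub P by blast
    qed
    then show ?thesis using False P by auto
  qed
qed

lemma lam_induced_weighting:
  assumes x: "x \<in> X" and y: "y \<in> X" and xy: "x \<noteq> y"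
  shows "lam E x y (induced_weighting X s) = s x + s y"
proof -
  let ?P = "path_edges E x y"
  have "finite ?P"
    using path_edges_eq_bridges[OF tree] X_subset_V x y finite_E by (simp add: subset_iff)
  then have "lam E x y (induced_weighting X s) = (\<Sum>z\<in>X. \<Sum>e\<in>{e \<in> ?P. z \<in> e}. s z)"
    using sum.swap_restrict[of ?P X "\<lambda>e z. s z" "\<lambda>e z. z \<in> e"] finite_X
    by (simp add: lam_def induced_weighting_def Int_def)
  also have "\<dots> = (\<Sum>z\<in>X. if z = x \<or> z = y then s z else 0)"
    using path_edges_at_leaf[OF x y xy] by (intro sum.cong) auto
  also have "\<dots> = (\<Sum>z \<in> {z \<in> X. z = x \<or> z = y}. s z)"
    by (rule sum.inter_filter[OF finite_X, symmetric])
  also have "{z \<in> X. z = x \<or> z = y} = {x, y}" using x y by blast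
  finally show ?thesis using xy by simp
qed

lemma finite_cord_forms: "L \<subseteq> cords X \<Longrightarrow> finite (cord_forms E L)"
proof -
  assume "L \<subseteq> cords X"
  then have "cord_forms E L \<subseteq> (\<lambda>(x, y). lam E x y) ` (X \<times> X)"
    by (force simp: cord_forms_def cords_def)
  then show ?thesis using finite_X finite_subset by blast
qed

lemma cord_forms_mono: "L \<subseteq> L' \<Longrightarrow> cord_forms E L \<subseteq> cord_forms E L'"
  unfolding cord_forms_def by blast

lemma cord_forms_insert:
  assumes "x \<in> X" "y \<in> X" "x \<noteq> y"
  shows "cord_forms E (L \<union> {{x, y}}) = insert (lam E x y) (cord_forms E L)"
proof -
  have "x \<in> V" "y \<in> V" using X_subset_V assms by auto
  then have "lam E y x = lam E x y" by (simp add: lam_def path_edges_commute[OF tree])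
  then show ?thesis using assms(3) unfolding cord_forms_def by (auto simp: doubleton_eq_iff)
qed

lemma lam_in_span_edge_evals:
  assumes "x \<in> V" "y \<in> V"
  shows "lam E x y \<in> VS.span (edge_eval ` E)"
proof -
  have "path_edges E x y \<subseteq> E" using path_edges_eq_bridges[OF tree assms] by blast
  moreover have "lam E x y = (\<Sum>e\<in>path_edges E x y. edge_eval e)"
    by (simp add: fun_eq_iff lam_def edge_eval_def sum_apply)
  ultimately show ?thesis by (auto intro: VS.span_sum VS.span_base)
qed

lemma cord_forms_in_span_edge_evals: "L \<subseteq> cords X \<Longrightarrow> cord_forms E L \<subseteq> VS.span (edge_eval ` E)"
  using lam_in_span_edge_evals X_subset_V by (force simp: cord_forms_def cords_def)

lemma dim_le_card_E: "T \<subseteq> VS.span (edge_eval ` E) \<Longrightarrow> VS.dim T \<le> card E"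
  using VS.dim_le_card[of T "edge_eval ` E"] finite_E card_image_le[OF finite_E, of edge_eval]
  by simp

lemma rk_mono: "L \<subseteq> L' \<Longrightarrow> L' \<subseteq> cords X \<Longrightarrow> rk E L \<le> rk E L'"
  unfolding rk_eq_dim_cord_forms
  by (rule VS.dim_mono_if_finite[OF finite_cord_forms]) (auto dest!: cord_forms_mono intro: VS.span_base)

lemma rk_insert_le:
  assumes "L \<subseteq> cords X" "c \<in> cords X"
  shows "rk E (L \<union> {c}) \<le> Suc (rk E L)"
proof -
  obtain x y where xy: "c = {x, y}" "x \<noteq> y" "x \<in> X" "y \<in> X" using assms(2) by (rule cordsE)
  show ?thesis
    unfolding rk_eq_dim_cord_forms xy(1) cord_forms_insert[OF xy(3,4,2)]
    using VS.dim_insert_if_finite[OF finite_cord_forms[OF assms(1)], of "lam E x y"] by simp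
qed

lemma cord_forms_vanish_signed:
  assumes L: "L \<subseteq> cords X" "L \<subseteq> join A B" "A \<inter> B = {}"
    and C: "\<And>x y. {x, y} \<in> L \<Longrightarrow> x \<in> C \<longleftrightarrow> y \<in> C" and f: "f \<in> cord_forms E L"
  shows "f (induced_weighting X (signed_indicator A C)) = 0"
proof -
  obtain x y where xy: "f = lam E x y" "{x, y} \<in> L" "x \<noteq> y"
    using f by (auto simp: cord_forms_def)
  then have "x \<in> X" "y \<in> X" using L(1) by (auto simp: cords_def)
  then have "f (induced_weighting X (signed_indicator A C))
      = signed_indicator A C x + signed_indicator A C y"
    using lam_induced_weighting xy(1,3) by simp
  moreover have "{x, y} \<in> join A B" using xy(2) L(2) by blast
  then have "(x \<in> A \<and> y \<in> B) \<or> (x \<in> B \<and> y \<in> A)"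
    by (simp add: doubleton_in_join_iff[OF L(3)])
  ultimately show ?thesis
    using C[OF xy(2)] L(3) unfolding signed_indicator_def by auto
qed

lemma pendant_edge_signed_indicator:
  "x \<in> X \<Longrightarrow> edge_eval (pendant_edge E x) (induced_weighting X (signed_indicator A C)) \<noteq> 0 \<longleftrightarrow> x \<in> C"
  by (simp add: edge_eval_def pendant_edge_weight signed_indicator_def)

lemma edge_eval_pendant_edge_in_span: "x \<in> X \<Longrightarrow> edge_eval (pendant_edge E x) \<in> VS.span (edge_eval ` E)"
  using edges_at_leaf by (blast intro: VS.span_base)

lemma rk_lt_card_if_bipartite:
  assumes L: "L \<subseteq> cords X" "L \<subseteq> join A B" "A \<inter> B = {}"
  shows "rk E L < card E"
proof -
  obtain x where x: "x \<in> X" using three_le_card_X by fastforce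
  let ?\<omega> = "induced_weighting X (signed_indicator A UNIV)"
  let ?g = "edge_eval (pendant_edge E x)"
  have "Suc (rk E L) = VS.dim (insert ?g (cord_forms E L))"
    unfolding rk_eq_dim_cord_forms
    by (rule dim_insert_nonvanishing[symmetric, OF finite_cord_forms[OF L(1)], of ?\<omega>])
      (use cord_forms_vanish_signed[OF L, of UNIV] pendant_edge_signed_indicator[OF x, of A UNIV]
        in auto)
  also have "\<dots> \<le> card E"
    using cord_forms_in_span_edge_evals[OF L(1)] edge_eval_pendant_edge_in_span[OF x]
    by (intro dim_le_card_E) blast
  finally show ?thesis by simp
qed

lemma rk_insert_same_side:
  assumes L: "L \<subseteq> cords X" "L \<subseteq> join A B" "A \<inter> B = {}"
    and a: "a \<in> X" "a' \<in> X" "a \<noteq> a'" "a \<in> A \<longleftrightarrow> a' \<in> A"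
  shows "rk E (L \<union> {{a, a'}}) = Suc (rk E L)"
  unfolding rk_eq_dim_cord_forms cord_forms_insert[OF a(1-3)]
  by (rule dim_insert_nonvanishing[OF finite_cord_forms[OF L(1)]])
    (use cord_forms_vanish_signed[OF L, of UNIV] lam_induced_weighting[OF a(1-3)] a(4) in
      \<open>auto simp: signed_indicator_def\<close>)

lemma rk_le_if_disconnected:
  assumes L: "L \<subseteq> cords X" "L \<subseteq> join A B" "A \<inter> B = {}"
    and disconnected: "\<not> cords_connected X L"
  shows "Suc (Suc (rk E L)) \<le> card E"
proof -
  obtain u v where uv: "u \<in> X" "v \<in> X" "(u, v) \<notin> (adj_rel L)\<^sup>*"
    using disconnected unfolding cords_connected_def graph_connected_def by blast
  define C where "C = (adj_rel L)\<^sup>* `` {u}"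
  have C_closed: "x \<in> C \<longleftrightarrow> y \<in> C" if "{x, y} \<in> L" for x y
  proof -
    have "(x, y) \<in> (adj_rel L)\<^sup>= \<and> (y, x) \<in> (adj_rel L)\<^sup>="
      using that by (auto simp: adj_rel_def insert_commute)
    then show ?thesis unfolding C_def by (auto intro: rtrancl_into_rtrancl)
  qed
  then have C'_closed: "x \<in> - C \<longleftrightarrow> y \<in> - C" if "{x, y} \<in> L" for x y
    using that by blast
  have "u \<in> C" "v \<notin> C" using uv(3) by (auto simp: C_def)
  let ?\<omega>1 = "induced_weighting X (signed_indicator A C)"
  let ?\<omega>2 = "induced_weighting X (signed_indicator A (- C))"
  let ?g1 = "edge_eval (pendant_edge E u)" and ?g2 = "edge_eval (pendant_edge E v)"
  let ?S = "cord_forms E L"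
  have fin: "finite ?S" by (rule finite_cord_forms[OF L(1)])
  have g1: "?g1 ?\<omega>1 \<noteq> 0" "?g1 ?\<omega>2 = 0" and g2: "?g2 ?\<omega>2 \<noteq> 0"
    using pendant_edge_signed_indicator[OF uv(1), of A] pendant_edge_signed_indicator[OF uv(2), of A]
      \<open>u \<in> C\<close> \<open>v \<notin> C\<close> by auto
  have "Suc (rk E L) = VS.dim (insert ?g1 ?S)"
    unfolding rk_eq_dim_cord_forms
    by (rule dim_insert_nonvanishing[symmetric, OF fin, of ?\<omega>1])
      (use cord_forms_vanish_signed[OF L C_closed] g1 in auto)
  moreover have "VS.dim (insert ?g2 (insert ?g1 ?S)) = Suc (VS.dim (insert ?g1 ?S))"
    by (rule dim_insert_nonvanishing[of _ ?\<omega>2])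
      (use fin cord_forms_vanish_signed[OF L C'_closed] g1 g2 in auto)
  moreover have "VS.dim (insert ?g2 (insert ?g1 ?S)) \<le> card E"
    using cord_forms_in_span_edge_evals[OF L(1)] edge_eval_pendant_edge_in_span uv(1,2)
    by (intro dim_le_card_E) blast
  ultimately show ?thesis by simp
qed

lemma cord_forms_closure_subset_span:
  assumes L: "L \<subseteq> cords X"
  shows "cord_forms E (closure_T E X L) \<subseteq> VS.span (cord_forms E L)"
proof
  fix f assume "f \<in> cord_forms E (closure_T E X L)"
  then obtain x y where f: "f = lam E x y" "{x, y} \<in> closure_T E X L" "x \<noteq> y"
    by (auto simp: cord_forms_def)
  then have xy: "x \<in> X" "y \<in> X" "rk E (L \<union> {{x, y}}) = rk E L"
    by (auto simp: closure_T_def cords_def)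
  have "VS.dim (insert f (cord_forms E L)) = VS.dim (cord_forms E L)"
    using xy(3) unfolding rk_eq_dim_cord_forms cord_forms_insert[OF xy(1,2) f(3)] f(1) .
  then show "f \<in> VS.span (cord_forms E L)"
    using VS.dim_insert_if_finite[OF finite_cord_forms[OF L], of f] by (auto split: if_splits)
qed

lemma rk_ge_if_closure_hyperplane:
  assumes L: "L \<subseteq> cords X" and H: "hyperplane E X (closure_T E X L)"
    and c: "c \<in> cords X" "c \<notin> closure_T E X L"
  shows "card E \<le> Suc (rk E L)"
proof -
  let ?H = "closure_T E X L"
  obtain x y where xy: "c = {x, y}" "x \<noteq> y" "x \<in> X" "y \<in> X" using c(1) by (rule cordsE)
  have "?H \<subset> ?H \<union> {c}" "?H \<union> {c} \<subseteq> cords X"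
    using H c by (auto simp: hyperplane_def)
  then have "card E \<le> rk E (?H \<union> {c})"
    using H unfolding hyperplane_def by (meson not_less)
  also have "\<dots> \<le> VS.dim (insert (lam E x y) (cord_forms E L))"
    unfolding rk_eq_dim_cord_forms xy(1) cord_forms_insert[OF xy(3,4,2)]
    using cord_forms_closure_subset_span[OF L]
      VS.span_mono[of "cord_forms E L" "insert (lam E x y) (cord_forms E L)"]
    by (intro VS.dim_mono_if_finite) (auto simp: finite_cord_forms[OF L] intro: VS.span_base)
  also have "\<dots> \<le> Suc (rk E L)"
    using VS.dim_insert_if_finite[OF finite_cord_forms[OF L]] by (simp add: rk_eq_dim_cord_forms)
  finally show ?thesis .
qed

end

section \<open>Bipartite cord sets of maximal rank\<close>

locale bipartite_cords = X_tree_3_leaves +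
  fixes L :: "'a set set" and A B :: "'a set"
  assumes L_subset_cords: "L \<subseteq> cords X" and L_subset_join: "L \<subseteq> join A B"
    and sides_disjoint: "A \<inter> B = {}" and sides_cover: "A \<union> B = X"
begin

lemma join_subset_cords_X: "join A B \<subseteq> cords X"
  using join_subset_cords[OF sides_disjoint] sides_cover by simp

lemma cord_not_in_join_iff:
  "{x, y} \<in> cords X \<Longrightarrow> {x, y} \<notin> join A B \<longleftrightarrow> (x \<in> A \<longleftrightarrow> y \<in> A)"
  using sides_disjoint sides_cover by (auto simp: doubleton_in_join_iff cords_def)

lemma exists_cord_not_in_join: "\<exists>c \<in> cords X. c \<notin> join A B"
proof -
  obtain a a' where a: "a \<in> X" "a' \<in> X" "a \<noteq> a'" "a \<in> A \<longleftrightarrow> a' \<in> A"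
    using exists_pair_same_side[OF finite_X three_le_card_X] by blast
  have "{a, a'} \<in> cords X" using a(1-3) by (rule doubleton_in_cords)
  moreover have "{a, a'} \<notin> join A B" using cord_not_in_join_iff[OF calculation] a(4) by simp
  ultimately show ?thesis by blast
qed

lemma rk_lt_card: "rk E L < card E"
  by (rule rk_lt_card_if_bipartite[OF L_subset_cords L_subset_join sides_disjoint])

lemma rk_insert_not_in_join:
  assumes "c \<in> cords X" "c \<notin> join A B"
  shows "rk E (L \<union> {c}) = Suc (rk E L)"
proof -
  obtain x y where xy: "c = {x, y}" "x \<noteq> y" "x \<in> X" "y \<in> X" using assms(1) by (rule cordsE)
  then show ?thesis
    using rk_insert_same_side[OF L_subset_cords L_subset_join sides_disjoint xy(3,4,2)]
      cord_not_in_join_iff assms by blast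
qed

lemma rk_insert_in_join_lt: "c \<in> join A B \<Longrightarrow> rk E (L \<union> {c}) < card E"
  using rk_lt_card_if_bipartite[of "L \<union> {c}" A B] L_subset_cords L_subset_join
    join_subset_cords_X sides_disjoint by blast

lemma connected_if_rk_max: "rk E L = card E - 1 \<Longrightarrow> cords_connected X L"
  using rk_le_if_disconnected[OF L_subset_cords L_subset_join sides_disjoint] rk_lt_card by fastforce

lemma not_bipartite_insert:
  assumes "cords_connected X L" "c \<in> cords X" "c \<notin> join A B"
  shows "\<not> cords_bipartite X (L \<union> {c})"
proof -
  obtain x y where xy: "c = {x, y}" "x \<noteq> y" "x \<in> X" "y \<in> X" using assms(2) by (rule cordsE)
  then show ?thesis
    using connected_bipartite_insert_same_side[OF _ L_subset_join sides_disjoint xy(3,4)] assms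
      cord_not_in_join_iff unfolding cords_connected_def by blast
qed

theorem rk_max_iff_lasso_extension:
  "rk E L = card E - 1 \<longleftrightarrow> (\<exists>c\<in>cords X. edge_weight_lasso E X (L \<union> {c}))"
proof
  assume "rk E L = card E - 1"
  moreover obtain c where "c \<in> cords X" "c \<notin> join A B" using exists_cord_not_in_join by blast
  ultimately show "\<exists>c\<in>cords X. edge_weight_lasso E X (L \<union> {c})"
    using rk_insert_not_in_join rk_lt_card L_subset_cords
    by (intro bexI[of _ c]) (auto simp: edge_weight_lasso_def)
next
  assume "\<exists>c\<in>cords X. edge_weight_lasso E X (L \<union> {c})"
  then show "rk E L = card E - 1"
    using rk_insert_le[OF L_subset_cords] rk_lt_card
    by (fastforce simp: edge_weight_lasso_def)
qed

theorem rk_max_iff_lasso_extensions_not_bipartite: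
  "rk E L = card E - 1 \<longleftrightarrow> cords_connected X L
     \<and> (\<forall>c\<in>cords X. edge_weight_lasso E X (L \<union> {c}) \<longleftrightarrow> \<not> cords_bipartite X (L \<union> {c}))"
proof
  assume max: "rk E L = card E - 1"
  have "edge_weight_lasso E X (L \<union> {c}) \<longleftrightarrow> \<not> cords_bipartite X (L \<union> {c})"
    if c: "c \<in> cords X" for c
  proof (cases "c \<in> join A B")
    case True
    then have "cords_bipartite X (L \<union> {c})"
      unfolding cords_bipartite_def using L_subset_join sides_disjoint sides_cover by blast
    then show ?thesis using rk_insert_in_join_lt[OF True] by (simp add: edge_weight_lasso_def)
  next
    case False
    then show ?thesis
      using rk_insert_not_in_join[OF c False] max rk_lt_card L_subset_cords c
        not_bipartite_insert[OF connected_if_rk_max[OF max] c False]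
      by (auto simp: edge_weight_lasso_def)
  qed
  then show "cords_connected X L
     \<and> (\<forall>c\<in>cords X. edge_weight_lasso E X (L \<union> {c}) \<longleftrightarrow> \<not> cords_bipartite X (L \<union> {c}))"
    using connected_if_rk_max[OF max] by blast
next
  assume "cords_connected X L
     \<and> (\<forall>c\<in>cords X. edge_weight_lasso E X (L \<union> {c}) \<longleftrightarrow> \<not> cords_bipartite X (L \<union> {c}))"
  moreover obtain c where "c \<in> cords X" "c \<notin> join A B" using exists_cord_not_in_join by blast
  ultimately show "rk E L = card E - 1"
    using not_bipartite_insert rk_max_iff_lasso_extension by blast
qed

lemma sides_nonempty_if_connected:
  assumes "cords_connected X L"
  shows "A \<noteq> {}" "B \<noteq> {}"
proof -
  obtain x y where "x \<in> X" "y \<in> X" "x \<noteq> y"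
    using exists_pair_same_side[OF finite_X three_le_card_X] by blast
  then have "(x, y) \<in> (adj_rel L)\<^sup>+"
    using assms by (auto simp: cords_connected_def graph_connected_def rtrancl_eq_or_trancl)
  then obtain z where "(x, z) \<in> adj_rel L" by (meson converse_tranclE)
  then have "{x, z} \<in> join A B" using L_subset_join by (auto simp: adj_rel_def)
  then show "A \<noteq> {}" "B \<noteq> {}" by (auto simp: join_def)
qed

lemma closure_eq_join_if_rk_max:
  assumes max: "rk E L = card E - 1"
  shows "closure_T E X L = join A B"
proof (intro equalityI subsetI)
  fix c assume "c \<in> closure_T E X L"
  then have "c \<in> cords X" "rk E (L \<union> {c}) = rk E L" by (auto simp: closure_T_def)
  then show "c \<in> join A B" using rk_insert_not_in_join by force
next
  fix c assume c: "c \<in> join A B"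
  then have "c \<in> cords X" using join_subset_cords_X by blast
  then have "rk E L \<le> rk E (L \<union> {c})"
    using L_subset_cords by (intro rk_mono) auto
  then show "c \<in> closure_T E X L"
    using c rk_insert_in_join_lt[OF c] max join_subset_cords_X by (auto simp: closure_T_def)
qed

lemma join_hyperplane_if_rk_max:
  assumes max: "rk E L = card E - 1"
  shows "hyperplane E X (join A B)"
  unfolding hyperplane_def
proof (intro conjI allI impI)
  show "join A B \<subseteq> cords X" by (rule join_subset_cords_X)
  show "rk E (join A B) < card E"
    by (rule rk_lt_card_if_bipartite[OF join_subset_cords_X order_refl sides_disjoint])
  fix H assume H: "join A B \<subset> H \<and> H \<subseteq> cords X"
  then obtain c where c: "c \<in> H" "c \<notin> join A B" by blast
  have "rk E (L \<union> {c}) \<le> rk E H"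
    using H c L_subset_join by (intro rk_mono) auto
  then show "\<not> rk E H < card E"
    using rk_insert_not_in_join[of c] c H max rk_lt_card by auto
qed

theorem rk_max_iff_closure_hyperplane:
  "rk E L = card E - 1 \<longleftrightarrow> cords_connected X L
     \<and> (\<exists>A B. A \<noteq> {} \<and> B \<noteq> {} \<and> A \<inter> B = {} \<and> A \<union> B = X \<and> L \<subseteq> join A B
          \<and> closure_T E X L = join A B \<and> hyperplane E X (join A B))"
proof
  assume max: "rk E L = card E - 1"
  then show "cords_connected X L
     \<and> (\<exists>A B. A \<noteq> {} \<and> B \<noteq> {} \<and> A \<inter> B = {} \<and> A \<union> B = X \<and> L \<subseteq> join A B
          \<and> closure_T E X L = join A B \<and> hyperplane E X (join A B))"
    using connected_if_rk_max sides_nonempty_if_connected closure_eq_join_if_rk_max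
      join_hyperplane_if_rk_max sides_disjoint sides_cover L_subset_join by blast
next
  assume "cords_connected X L
     \<and> (\<exists>A B. A \<noteq> {} \<and> B \<noteq> {} \<and> A \<inter> B = {} \<and> A \<union> B = X \<and> L \<subseteq> join A B
          \<and> closure_T E X L = join A B \<and> hyperplane E X (join A B))"
  then obtain A' B' where AB': "A' \<inter> B' = {}" "A' \<union> B' = X"
    and closure: "closure_T E X L = join A' B'" and H: "hyperplane E X (join A' B')" by blast
  obtain a a' where "a \<in> X" "a' \<in> X" "a \<noteq> a'" "a \<in> A' \<longleftrightarrow> a' \<in> A'"
    using exists_pair_same_side[OF finite_X three_le_card_X] by blast
  then have "{a, a'} \<in> cords X" "{a, a'} \<notin> closure_T E X L"
    using closure AB'(1) by (auto simp: doubleton_in_join_iff intro: doubleton_in_cords)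
  then show "rk E L = card E - 1"
    using rk_ge_if_closure_hyperplane[OF L_subset_cords] H closure rk_lt_card by fastforce
qed

end

theorem mainTheorem9:
  fixes V :: "'a set" and E :: "'a set set" and X :: "'a set"
  assumes tree: "X_tree V E X"
    and n3: "card X \<ge> 3"
  shows "(\<forall>L. L \<subseteq> cords X \<and> cords_bipartite X L \<longrightarrow> rk E L \<le> card E - 1)
    \<and> (\<forall>L. L \<subseteq> cords X \<and> cords_bipartite X L \<longrightarrow>
        ((rk E L = card E - 1
            \<longleftrightarrow> (\<exists>c\<in>cords X. edge_weight_lasso E X (L \<union> {c})))
       \<and> (rk E L = card E - 1
            \<longleftrightarrow> cords_connected X L
                \<and> (\<forall>c\<in>cords X. edge_weight_lasso E X (L \<union> {c})
                        \<longleftrightarrow> \<not> cords_bipartite X (L \<union> {c})))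
       \<and> (rk E L = card E - 1
            \<longleftrightarrow> cords_connected X L
                \<and> (\<exists>A B. A \<noteq> {} \<and> B \<noteq> {} \<and> A \<inter> B = {} \<and> A \<union> B = X \<and> L \<subseteq> join A B
                        \<and> closure_T E X L = join A B \<and> hyperplane E X (join A B)))))"
proof (intro conjI allI impI; elim conjE)
  fix L assume L: "L \<subseteq> cords X" and "cords_bipartite X L"
  then obtain A B where "L \<subseteq> join A B" "A \<inter> B = {}" "A \<union> B = X"
    unfolding cords_bipartite_def by blast
  then interpret bipartite_cords V E X L A B
    using tree n3 L by unfold_locales
  show "rk E L \<le> card E - 1" using rk_lt_card by simp
  show "rk E L = card E - 1 \<longleftrightarrow> (\<exists>c\<in>cords X. edge_weight_lasso E X (L \<union> {c}))"
    by (rule rk_max_iff_lasso_extension)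
  show "rk E L = card E - 1 \<longleftrightarrow> cords_connected X L
      \<and> (\<forall>c\<in>cords X. edge_weight_lasso E X (L \<union> {c}) \<longleftrightarrow> \<not> cords_bipartite X (L \<union> {c}))"
    by (rule rk_max_iff_lasso_extensions_not_bipartite)
  show "rk E L = card E - 1 \<longleftrightarrow> cords_connected X L
      \<and> (\<exists>A B. A \<noteq> {} \<and> B \<noteq> {} \<and> A \<inter> B = {} \<and> A \<union> B = X \<and> L \<subseteq> join A B
          \<and> closure_T E X L = join A B \<and> hyperplane E X (join A B))"
    by (rule rk_max_iff_closure_hyperplane)
qed

end
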